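(* Let $1\le k\le n$, let $\mathrm{St}(n,k)=\{Y\in\mathbb{R}^{n\times k}: Y^\top Y=I_k\}$ carry the metric $\langle V,W\rangle=2\operatorname{tr}(V^\top W)$ (the "Euclidean metric"), fix $X\in \mathrm{St}(n,k)$, and let $\beta\colon I\to T_X\mathrm{St}(n,k)$ be a curve ($I$ an interval containing $0$). Let $u(t)=\big(\dot\beta(t)X^\top-X\dot\beta(t)^\top,\;X^\top\dot\beta(t)\big)\in\mathfrak p$. Let $S\colon I\to O(\mathfrak p)$, $q=(R,\theta)\colon I\to O(n)\times O(k)$ and $T\colon I\to O(N_X\mathrm{St}(n,k))$ be the solutions (assumed defined on $I$) of $$\dot S(t)=-\tfrac12\,\mathrm{pr}_{\mathfrak p}\circ \mathrm{ad}_{S(t)u(t)}\circ S(t),\quad S(0)=\mathrm{id}_{\mathfrak p},$$ $$(\dot R(t),\dot\theta(t))=(R(t)\xi_1(t),\theta(t)\xi_2(t)),\quad (R(0),\theta(0))=(I_n,I_k),\quad\text{where }(\xi_1(t),\xi_2(t)):=S(t)u(t),$$ $$\dot T(t)=-P_X^\perp\circ f_{(\xi_1(t),\xi_2(t))}\circ T(t),\quad T(0)=\mathrm{id}_{N_X\mathrm{St}(n,k)}.$$ Define $\widehat\beta(t)=R(t)X\theta(t)^\top$, define $B(t)\colon T_X\mathrm{St}(n,k)\to T_{\widehat\beta(t)}\mathrm{St}(n,k)$ by $B(t)V=R(t)(\eta_1X-X\eta_2)\theta(t)^\top$ where $(\eta_1,\eta_2)=S(t)\big(VX^\top-XV^\top,\,X^\top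 V\big)$, and define $C(t)\colon N_X\mathrm{St}(n,k)\to N_{\widehat\beta(t)}\mathrm{St}(n,k)$ by $C(t)W=R(t)\,(T(t)W)\,\theta(t)^\top$. Then $(\beta(t),\widehat\beta(t),B(t),C(t))$ is an extrinsic rolling of $T_X\mathrm{St}(n,k)$ over $\mathrm{St}(n,k)$ with respect to the Euclidean metric.
   Context: $O(n)\times O(k)$ acts on $\mathbb{R}^{n\times k}$ by $\Phi_{(R,\theta)}(V)=RV\theta^\top$. Its Lie algebra $\mathfrak g=\mathfrak{so}(n)\times\mathfrak{so}(k)$ carries the $\mathrm{Ad}$-invariant scalar product $\langle(\Omega_1,\Psi_1),(\Omega_2,\Psi_2)\rangle=-\operatorname{tr}(\Omega_1\Omega_2)+2\operatorname{tr}(\Psi_1\Psi_2)$; $\mathfrak h=\{(\Omega,\eta)\in\mathfrak g:\Omega X=X\eta\}$ is the Lie algebra of the stabilizer $H$ of $X$, $\mathfrak p=\mathfrak h^\perp$, and $\mathrm{pr}_{\mathfrak p}\colon\mathfrak g\to\mathfrak p$ (projection along $\mathfrak h$) is $\mathrm{pr}_{\mathfrak p}(\Omega,\eta)=(XX^\top\Omega+\Omega XX^\top-2X\eta X^\top,\;X^\top\Omega X-\eta)$. $\mathrm{ad}_Y Z=[Y,Z]$ (componentwise commutator) and $O(\mathfrak p)$ is the group of linear maps of $\mathfrak p$ preserving $\langle\cdot,\cdot\rangle$. $T_Y\mathrm{St}(n,k)=\{V: Y^\top V+V^\top Y=0\}$, $N_Y\mathrm{St}(n,k)$ is its orthogonal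 complement in $\mathbb{R}^{n\times k}$ for the Frobenius product, $P_Y^\perp(V)=\tfrac12 Y(Y^\top V+V^\top Y)$ is the orthogonal projection onto $N_Y\mathrm{St}(n,k)$, and $f_{(\xi_1,\xi_2)}(V)=\xi_1V-V\xi_2$. The linear subspace $T_X\mathrm{St}(n,k)\subset\mathbb{R}^{n\times k}$ is viewed as a submanifold with tangent space $T_X\mathrm{St}(n,k)$ and normal space $N_X\mathrm{St}(n,k)$ at every point. An extrinsic rolling of a submanifold $M$ over a submanifold $\widehat M$ of equal dimension (both isometrically embedded in the same pseudo-Euclidean space) is a quadruple $(\alpha,\widehat\alpha,A,C)$ of curves $\alpha$ in $M$, $\widehat\alpha$ in $\widehat M$ and linear isometries $A(t)\colon T_{\alpha(t)}M\to T_{\widehat\alpha(t)}\widehat M$, $C(t)\colon N_{\alpha(t)}M\to N_{\widehat\alpha(t)}\widehat M$ such that: $\dot{\widehat\alpha}(t)=A(t)\dot\alpha(t)$; $A(t)Z(t)$ is parallel (Levi-Civita) along $\widehat\alpha$ iff $Z$ is parallel along $\alpha$; and $C(t)Z(t)$ is normal parallel along $\widehat\alpha$ iff $Z$ is normal parallel along $\alpha$, where a normal vector field $Z$ along a curve $c$ is normal parallel if the normal component of $\tfrac{d}{dt}Z(t)$ vanishes. On $T_X\mathrm{St}(n,k)$ parallel (tangent or normal) fields along curves are the constant ones. *)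

theory Defs
  imports "HOL-Analysis.Analysis"
begin

(* n x k real matrices are  real^'k^'n ; n = CARD('n), k = CARD('k). *)

definition Stiefel :: "(real^'k^'n) set" where
  "Stiefel = {Y. transpose Y ** Y = mat 1}"

definition StT :: "real^'k^'n \<Rightarrow> (real^'k^'n) set" where
  "StT Y = {V. transpose Y ** V + transpose V ** Y = 0}"

definition frob :: "real^'k^'n \<Rightarrow> real^'k^'n \<Rightarrow> real" where
  "frob V W = trace (transpose V ** W)"

definition StN :: "real^'k^'n \<Rightarrow> (real^'k^'n) set" where
  "StN Y = {W. \<forall>V\<in>StT Y. frob W V = 0}"

definition PperpSt :: "real^'k^'n \<Rightarrow> real^'k^'n \<Rightarrow> real^'k^'n" where
  "PperpSt Y V = (1/2) *\<^sub>R (Y ** (transpose Y ** V + transpose V ** Y))"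

definition eucl_metric :: "real^'k^'n \<Rightarrow> real^'k^'n \<Rightarrow> real" where
  "eucl_metric V W = 2 * trace (transpose V ** W)"

definition gset :: "((real^'n^'n) \<times> (real^'k^'k)) set" where
  "gset = {(\<Omega>, \<Psi>). transpose \<Omega> = - \<Omega> \<and> transpose \<Psi> = - \<Psi>}"

definition gprod :: "(real^'n^'n) \<times> (real^'k^'k) \<Rightarrow> (real^'n^'n) \<times> (real^'k^'k) \<Rightarrow> real" where
  "gprod Z W = - trace (fst Z ** fst W) + 2 * trace (snd Z ** snd W)"

definition hset :: "real^'k^'n \<Rightarrow> ((real^'n^'n) \<times> (real^'k^'k)) set" where
  "hset X = {(\<Omega>, \<eta>) \<in> gset. \<Omega> ** X = X ** \<eta>}"

definition pset :: "real^'k^'n \<Rightarrow> ((real^'n^'n) \<times> (real^'k^'k)) set" where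
  "pset X = {Z \<in> gset. \<forall>W\<in>hset X. gprod Z W = 0}"

definition pr_p :: "real^'k^'n \<Rightarrow> (real^'n^'n) \<times> (real^'k^'k) \<Rightarrow> (real^'n^'n) \<times> (real^'k^'k)" where
  "pr_p X Z = (X ** transpose X ** fst Z + fst Z ** X ** transpose X - 2 *\<^sub>R (X ** snd Z ** transpose X),
               transpose X ** fst Z ** X - snd Z)"

definition ad :: "(real^'n^'n) \<times> (real^'k^'k) \<Rightarrow> (real^'n^'n) \<times> (real^'k^'k) \<Rightarrow> (real^'n^'n) \<times> (real^'k^'k)" where
  "ad Y Z = (fst Y ** fst Z - fst Z ** fst Y, snd Y ** snd Z - snd Z ** snd Y)"

definition f_act :: "(real^'n^'n) \<times> (real^'k^'k) \<Rightarrow> real^'k^'n \<Rightarrow> real^'k^'n" where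
  "f_act \<xi> V = fst \<xi> ** V - V ** snd \<xi>"

definition lin_isom :: "('a \<Rightarrow> 'a \<Rightarrow> real) \<Rightarrow> ('b \<Rightarrow> 'b \<Rightarrow> real) \<Rightarrow> 'a::real_vector set \<Rightarrow> 'b::real_vector set \<Rightarrow> ('a \<Rightarrow> 'b) \<Rightarrow> bool" where
  "lin_isom g h U W f \<longleftrightarrow>
     bij_betw f U W \<and>
     (\<forall>x\<in>U. \<forall>y\<in>U. f (x + y) = f x + f y) \<and>
     (\<forall>c. \<forall>x\<in>U. f (c *\<^sub>R x) = c *\<^sub>R f x) \<and>
     (\<forall>x\<in>U. \<forall>y\<in>U. h (f x) (f y) = g x y)"

definition O_p :: "real^'k^'n \<Rightarrow> ((real^'n^'n) \<times> (real^'k^'k) \<Rightarrow> (real^'n^'n) \<times> (real^'k^'k)) \<Rightarrow> bool" where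
  "O_p X S \<longleftrightarrow> lin_isom gprod gprod (pset X) (pset X) S"

definition O_N :: "real^'k^'n \<Rightarrow> (real^'k^'n \<Rightarrow> real^'k^'n) \<Rightarrow> bool" where
  "O_N X T \<longleftrightarrow> lin_isom eucl_metric eucl_metric (StN X) (StN X) T"

definition gcompl :: "('a \<Rightarrow> 'a \<Rightarrow> real) \<Rightarrow> 'a set \<Rightarrow> 'a set" where
  "gcompl g U = {v. \<forall>w\<in>U. g v w = 0}"

(* Z tangent along c, and Levi-Civita parallel: tangential part of dZ/dt vanishes
   (Gauss formula for a submanifold of the ambient space) *)
definition tan_parallel :: "('a::real_normed_vector \<Rightarrow> 'a \<Rightarrow> real) \<Rightarrow> ('a \<Rightarrow> 'a set) \<Rightarrow> real set \<Rightarrow> (real \<Rightarrow> 'a) \<Rightarrow> (real \<Rightarrow> 'a) \<Rightarrow> bool" where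
  "tan_parallel g TM I c Z \<longleftrightarrow>
     (\<exists>Z'. \<forall>t\<in>I. Z t \<in> TM (c t) \<and> (Z has_vector_derivative Z' t) (at t within I)
                 \<and> Z' t \<in> gcompl g (TM (c t)))"

definition nor_parallel :: "('a::real_normed_vector \<Rightarrow> 'a \<Rightarrow> real) \<Rightarrow> ('a \<Rightarrow> 'a set) \<Rightarrow> real set \<Rightarrow> (real \<Rightarrow> 'a) \<Rightarrow> (real \<Rightarrow> 'a) \<Rightarrow> bool" where
  "nor_parallel g TM I c Z \<longleftrightarrow>
     (\<exists>Z'. \<forall>t\<in>I. Z t \<in> gcompl g (TM (c t)) \<and> (Z has_vector_derivative Z' t) (at t within I)
                 \<and> Z' t \<in> TM (c t))"

definition ext_rolling ::
  "('a::real_normed_vector \<Rightarrow> 'a \<Rightarrow> real) \<Rightarrow> 'a set \<Rightarrow> ('a \<Rightarrow> 'a set) \<Rightarrow> 'a set \<Rightarrow> ('a \<Rightarrow> 'a set) \<Rightarrow>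
   real set \<Rightarrow> (real \<Rightarrow> 'a) \<Rightarrow> (real \<Rightarrow> 'a) \<Rightarrow> (real \<Rightarrow> 'a \<Rightarrow> 'a) \<Rightarrow> (real \<Rightarrow> 'a \<Rightarrow> 'a) \<Rightarrow> bool" where
  "ext_rolling g M TM Mh TMh I \<alpha> \<alpha>h A C \<longleftrightarrow>
     (\<forall>t\<in>I. \<alpha> t \<in> M \<and> \<alpha>h t \<in> Mh) \<and>
     (\<forall>t\<in>I. lin_isom g g (TM (\<alpha> t)) (TMh (\<alpha>h t)) (A t)) \<and>
     (\<forall>t\<in>I. lin_isom g g (gcompl g (TM (\<alpha> t))) (gcompl g (TMh (\<alpha>h t))) (C t)) \<and>
     (\<exists>\<alpha>'. \<forall>t\<in>I. (\<alpha> has_vector_derivative \<alpha>' t) (at t within I) \<and>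
                  (\<alpha>h has_vector_derivative A t (\<alpha>' t)) (at t within I)) \<and>
     (\<forall>Z. (\<forall>t\<in>I. Z t \<in> TM (\<alpha> t)) \<longrightarrow>
          (tan_parallel g TMh I \<alpha>h (\<lambda>t. A t (Z t)) \<longleftrightarrow> tan_parallel g TM I \<alpha> Z)) \<and>
     (\<forall>Z. (\<forall>t\<in>I. Z t \<in> gcompl g (TM (\<alpha> t))) \<longrightarrow>
          (nor_parallel g TMh I \<alpha>h (\<lambda>t. C t (Z t)) \<longleftrightarrow> nor_parallel g TM I \<alpha> Z))"

end

theory Submission
  imports Defs
begin

(* Write Phi_(R,theta) V = R V theta^T. The map hlift X : V |-> (V X^T - X V^T, X^T V) is a linear
   isometry from T_X St(n,k) onto p with inverse eta |-> eta_1 X - X eta_2 (this uses p /\ h = 0), and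
   Phi_(R,theta) is an isometry of the ambient space carrying T_X St and N_X St onto the tangent and
   normal spaces at Phi_(R,theta) X. Hence B(t) and C(t) are isometries onto the right spaces.

   For fixed V, differentiating B(t) V with the equations for q and S gives Phi_q(t) applied to
   xi.(eta.X) - 1/2 [xi, eta].X, where zeta.Y = zeta_1 Y - Y zeta_2 and eta = S(t) (hlift X V); this
   equals -1/2 X (A^T B + B^T A) with A = xi.X, B = eta.X, so it is normal. Likewise the derivative of
   C(t) W is Phi_q(t) of a tangent vector. So B and C carry constant fields to parallel ones.
   Conversely, if B(t) Z(t) is parallel then <Z(t), b> = <B(t) Z(t), B(t) b> has derivative zero for
   every tangent b, hence Z is constant; the same argument works for C. *)

section \<open>Matrix algebra and the Frobenius inner product\<close>

lemma matrix_add_rdistrib: "((A::'a::semiring_1^'n^'m) + B) ** C = A ** C + B ** C"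
  by (vector matrix_matrix_mult_def sum.distrib[symmetric] distrib_right)

lemma matrix_diff_ldistrib: "(A::'a::ring_1^'n^'m) ** (B - C) = A ** B - A ** C"
  by (vector matrix_matrix_mult_def sum_subtractf[symmetric] right_diff_distrib)

lemma matrix_diff_rdistrib: "((A::'a::ring_1^'n^'m) - B) ** C = A ** C - B ** C"
  by (vector matrix_matrix_mult_def sum_subtractf[symmetric] left_diff_distrib)

lemma matrix_mul_lneg: "(- (A::'a::ring_1^'n^'m)) ** C = - (A ** C)"
  by (vector matrix_matrix_mult_def sum_negf[symmetric])

lemma matrix_mul_rneg: "(A::'a::ring_1^'n^'m) ** (- C) = - (A ** C)"
  by (vector matrix_matrix_mult_def sum_negf[symmetric])

lemma matrix_mul_scaleR_left: "(c *\<^sub>R (A::real^'n^'m)) ** C = c *\<^sub>R (A ** C)"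
  by (simp add: scalar_matrix_assoc)

lemma matrix_mul_scaleR_right: "(A::real^'n^'m) ** (c *\<^sub>R C) = c *\<^sub>R (A ** C)"
  by (simp add: matrix_scalar_ac scalar_matrix_assoc)

lemma transpose_add: "transpose (A + B) = transpose A + transpose (B::'a::semiring_1^'n^'m)"
  by (vector transpose_def)

lemma transpose_diff: "transpose (A - B) = transpose A - transpose (B::'a::ring_1^'n^'m)"
  by (vector transpose_def)

lemma transpose_uminus: "transpose (- A) = - transpose (A::'a::ring_1^'n^'m)"
  by (vector transpose_def)

lemma transpose_zero: "transpose (0::'a::semiring_1^'n^'m) = 0"
  by (vector transpose_def)

lemma trace_uminus: "trace (- (A::'a::ring_1^'n^'n)) = - trace A"
  by (simp add: trace_def sum_negf)

lemma trace_transpose: "trace (transpose (A::'a::semiring_1^'n^'n)) = trace A"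
  by (simp add: trace_def transpose_def)

lemmas matrix_ring_simps = matrix_add_ldistrib matrix_add_rdistrib matrix_diff_ldistrib
  matrix_diff_rdistrib matrix_mul_lneg matrix_mul_rneg matrix_mul_scaleR_left matrix_mul_scaleR_right
  transpose_add transpose_diff transpose_uminus transpose_zero transpose_scalar matrix_transpose_mul
  matrix_mul_assoc[symmetric]

lemma trace_sym_skew_mult:
  assumes "transpose S = S" "transpose K = - K"
  shows "trace ((S::real^'n^'n) ** K) = 0"
proof -
  have "trace (S ** K) = trace (transpose (S ** K))" by (simp add: trace_transpose)
  also have "\<dots> = - trace (K ** S)" using assms by (simp add: matrix_transpose_mul matrix_mul_lneg trace_uminus)
  also have "\<dots> = - trace (S ** K)" by (subst trace_mul_sym) (rule refl)
  finally show ?thesis by simp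
qed

(* algebra_simps rewrites A + A to the entrywise product 2 * A of vectors; these undo that. *)
lemma matrix_numeral_2_times: "(2::real^'m^'n) * A = 2 *\<^sub>R A"
  and matrix_numeral_2_times': "A * (2::real^'m^'n) = 2 *\<^sub>R A"
  by (simp_all add: vec_eq_iff)

lemma frob_eq_inner: "frob V W = V \<bullet> W"
  unfolding frob_def trace_def matrix_matrix_mult_def transpose_def inner_vec_def inner_real_def
  by (simp, subst sum.swap, simp add: mult.commute)

lemma inner_self_eq_trace: "(P::real^'k^'n) \<bullet> P = trace (transpose P ** P)"
  by (simp add: frob_eq_inner[symmetric] frob_def)

lemma eucl_metric_eq_inner: "eucl_metric V W = 2 * (V \<bullet> W)"
  by (simp add: eucl_metric_def frob_def[symmetric] frob_eq_inner)

lemma gcompl_eucl_metric_iff: "V \<in> gcompl eucl_metric U \<longleftrightarrow> (\<forall>W\<in>U. V \<bullet> W = 0)"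
  by (simp add: gcompl_def eucl_metric_eq_inner)

lemma inner_gcompl_eucl_metric_left: "V \<in> gcompl eucl_metric U \<Longrightarrow> W \<in> U \<Longrightarrow> V \<bullet> W = 0"
  by (simp add: gcompl_eucl_metric_iff)

lemma inner_gcompl_eucl_metric_right: "W \<in> U \<Longrightarrow> V \<in> gcompl eucl_metric U \<Longrightarrow> W \<bullet> V = 0"
  by (subst inner_commute) (simp add: gcompl_eucl_metric_iff)

lemma zero_gcompl_eucl_metric: "0 \<in> gcompl eucl_metric U"
  by (simp add: gcompl_eucl_metric_iff)

lemma orthogonal_matrix_mult_cancel:
  assumes "orthogonal_matrix Q"
  shows "transpose Q ** Q = mat 1" "Q ** transpose Q = mat 1"
    "transpose Q ** (Q ** M) = M" "Q ** (transpose Q ** N) = N"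
  using assms by (simp_all add: orthogonal_matrix_def matrix_mul_assoc)

lemma lin_isom_linearI:
  assumes "linear f" "linear f'"
    and "\<And>x. x \<in> U \<Longrightarrow> f x \<in> W" "\<And>y. y \<in> W \<Longrightarrow> f' y \<in> U"
    and "\<And>x. x \<in> U \<Longrightarrow> f' (f x) = x" "\<And>y. y \<in> W \<Longrightarrow> f (f' y) = y"
    and "\<And>x y. x \<in> U \<Longrightarrow> y \<in> U \<Longrightarrow> h (f x) (f y) = g x y"
  shows "lin_isom g h U W f"
  unfolding lin_isom_def
  using assms by (auto intro!: bij_betw_byWitness[where f' = f'] simp: linear_add linear_scale)

lemma lin_isom_comp:
  assumes "lin_isom g h U V f" and "lin_isom h k V W f'"
  shows "lin_isom g k U W (f' \<circ> f)"
  using assms unfolding lin_isom_def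
  by (auto intro: bij_betw_trans simp: bij_betw_apply)

lemma lin_isom_mem: "lin_isom g h U W f \<Longrightarrow> x \<in> U \<Longrightarrow> f x \<in> W"
  unfolding lin_isom_def by (blast dest: bij_betw_apply)

lemma lin_isom_metric: "lin_isom g h U W f \<Longrightarrow> x \<in> U \<Longrightarrow> y \<in> U \<Longrightarrow> h (f x) (f y) = g x y"
  unfolding lin_isom_def by blast

section \<open>Curves and parallel fields\<close>

(* At isolated points of I every vector is a derivative, so hypotheses such as
   beta' t \<in> T_X St(n,k) are only available where at t within I is nontrivial. *)
lemma has_vector_derivative_at_bot:
  "at t within I = bot \<Longrightarrow> (f has_vector_derivative f') (at t within I)"
  by (simp add: has_vector_derivative_def has_derivative_def bounded_linear_scaleR_left)

lemma has_vector_derivative_nontrivialI: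
  "(at t within I \<noteq> bot \<Longrightarrow> (f has_vector_derivative f') (at t within I))
    \<Longrightarrow> (f has_vector_derivative f') (at t within I)"
  using has_vector_derivative_at_bot by blast

lemma has_vector_derivative_orthogonal:
  fixes Z :: "real \<Rightarrow> 'a::real_inner"
  assumes nontriv: "at t within I \<noteq> bot" and t: "t \<in> I"
    and Z': "(Z has_vector_derivative Z') (at t within I)"
    and orth: "\<And>s. s \<in> I \<Longrightarrow> Z s \<bullet> c = 0"
  shows "Z' \<bullet> c = 0"
proof -
  have "((\<lambda>s. Z s \<bullet> c) has_vector_derivative Z t \<bullet> 0 + Z' \<bullet> c) (at t within I)"
    by (rule bounded_bilinear.has_vector_derivative[OF bounded_bilinear_inner Z' has_vector_derivative_const])
  moreover have "((\<lambda>s. Z s \<bullet> c) has_vector_derivative 0) (at t within I)"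
    by (rule has_vector_derivative_transform[OF t _ has_vector_derivative_const]) (rule orth)
  ultimately show ?thesis
    using vector_derivative_unique_within[OF nontriv] by fastforce
qed

lemma has_vector_derivative_in_subspace:
  fixes Z :: "real \<Rightarrow> 'a::euclidean_space"
  assumes U: "subspace U" and Z: "\<And>s. s \<in> I \<Longrightarrow> Z s \<in> U"
    and nontriv: "at t within I \<noteq> bot" and t: "t \<in> I"
    and Z': "(Z has_vector_derivative Z') (at t within I)"
  shows "Z' \<in> U"
proof -
  obtain y z where y: "y \<in> span U" and z: "\<And>w. w \<in> span U \<Longrightarrow> orthogonal z w" and "Z' = y + z"
    using orthogonal_subspace_decomp_exists[where S = U and x = Z'] by blast
  have "Z' \<bullet> z = 0"
  proof (rule has_vector_derivative_orthogonal[OF nontriv t Z'])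
    fix s assume "s \<in> I"
    then show "Z s \<bullet> z = 0"
      using z[OF span_base[OF Z]] by (simp add: orthogonal_def inner_commute)
  qed
  moreover have "y \<bullet> z = 0"
    using z[OF y] by (simp add: orthogonal_def inner_commute)
  ultimately have "z = 0"
    using \<open>Z' = y + z\<close> by (simp add: inner_add_left)
  then show ?thesis
    using y \<open>Z' = y + z\<close> by (simp add: span_eq_iff[THEN iffD2, OF U])
qed

lemma bounded_bilinear_matrix_mult:
  "bounded_bilinear (\<lambda>(A :: real^'n^'m) (B :: real^'p^'n). A ** B)"
  unfolding bilinear_conv_bounded_bilinear[symmetric] bilinear_def
  by (auto intro!: linearI simp: matrix_ring_simps)

lemma has_vector_derivative_matrix_mult:
  assumes "(f has_vector_derivative f') (at t within I)" "(g has_vector_derivative g') (at t within I)"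
  shows "((\<lambda>s. (f s :: real^'n^'m) ** (g s :: real^'p^'n)) has_vector_derivative f t ** g' + f' ** g t)
    (at t within I)"
  by (rule bounded_bilinear.has_vector_derivative[OF bounded_bilinear_matrix_mult assms])

lemma has_vector_derivative_transpose:
  assumes "(f has_vector_derivative f') F"
  shows "((\<lambda>s. transpose (f s :: real^'n^'m)) has_vector_derivative transpose f') F"
proof -
  have "linear (transpose :: real^'n^'m \<Rightarrow> real^'m^'n)"
    by (rule linearI) (simp_all add: transpose_add transpose_scalar)
  then show ?thesis
    using assms by (simp add: linear_conv_bounded_linear bounded_linear.has_vector_derivative)
qed

definition parallel_wrt ::
    "(real \<Rightarrow> 'a set) \<Rightarrow> (real \<Rightarrow> 'a set) \<Rightarrow> real set \<Rightarrow> (real \<Rightarrow> 'a::real_normed_vector) \<Rightarrow> bool"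
  where
  "parallel_wrt F G I Z \<longleftrightarrow>
     (\<exists>Z'. \<forall>t\<in>I. Z t \<in> F t \<and> (Z has_vector_derivative Z' t) (at t within I) \<and> Z' t \<in> G t)"

lemma tan_parallel_eq_parallel_wrt:
  "tan_parallel g TM I c Z = parallel_wrt (\<lambda>t. TM (c t)) (\<lambda>t. gcompl g (TM (c t))) I Z"
  by (simp add: tan_parallel_def parallel_wrt_def)

lemma nor_parallel_eq_parallel_wrt:
  "nor_parallel g TM I c Z = parallel_wrt (\<lambda>t. gcompl g (TM (c t))) (\<lambda>t. TM (c t)) I Z"
  by (simp add: nor_parallel_def parallel_wrt_def)

lemma parallel_wrt_const_iff:
  fixes Z :: "real \<Rightarrow> 'a::real_inner"
  assumes Z: "\<And>t. t \<in> I \<Longrightarrow> Z t \<in> U" and "0 \<in> V"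
    and orth: "\<And>u v. u \<in> U \<Longrightarrow> v \<in> V \<Longrightarrow> u \<bullet> v = 0"
  shows "parallel_wrt (\<lambda>_. U) (\<lambda>_. V) I Z \<longleftrightarrow> (\<forall>t\<in>I. (Z has_vector_derivative 0) (at t within I))"
proof
  assume "parallel_wrt (\<lambda>_. U) (\<lambda>_. V) I Z"
  then obtain Z' where Z': "\<And>t. t \<in> I \<Longrightarrow> (Z has_vector_derivative Z' t) (at t within I) \<and> Z' t \<in> V"
    unfolding parallel_wrt_def by blast
  show "\<forall>t\<in>I. (Z has_vector_derivative 0) (at t within I)"
  proof
    fix t assume t: "t \<in> I"
    show "(Z has_vector_derivative 0) (at t within I)"
    proof (rule has_vector_derivative_nontrivialI)
      assume nontriv: "at t within I \<noteq> bot"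
      have "Z' t \<bullet> Z' t = 0"
        using has_vector_derivative_orthogonal[OF nontriv t] Z' t Z orth by blast
      then show ?thesis using Z'[OF t] by simp
    qed
  qed
next
  assume "\<forall>t\<in>I. (Z has_vector_derivative 0) (at t within I)"
  then show "parallel_wrt (\<lambda>_. U) (\<lambda>_. V) I Z"
    unfolding parallel_wrt_def using Z \<open>0 \<in> V\<close> by (intro exI[of _ "\<lambda>_. 0"]) auto
qed

lemma parallel_wrt_transport_imp_deriv_zero:
  fixes A :: "real \<Rightarrow> 'a::euclidean_space \<Rightarrow> 'b::real_inner"
  assumes U: "subspace U" and Z: "\<And>t. t \<in> I \<Longrightarrow> Z t \<in> U"
    and maps: "\<And>t u. t \<in> I \<Longrightarrow> u \<in> U \<Longrightarrow> A t u \<in> F t"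
    and isom: "\<And>t u v. t \<in> I \<Longrightarrow> u \<in> U \<Longrightarrow> v \<in> U \<Longrightarrow> A t u \<bullet> A t v = u \<bullet> v"
    and orth: "\<And>t f g. t \<in> I \<Longrightarrow> f \<in> F t \<Longrightarrow> g \<in> G t \<Longrightarrow> f \<bullet> g = 0"
    and deriv: "\<And>t u. t \<in> I \<Longrightarrow> at t within I \<noteq> bot \<Longrightarrow> u \<in> U \<Longrightarrow>
      \<exists>d\<in>G t. ((\<lambda>s. A s u) has_vector_derivative d) (at t within I)"
    and par: "parallel_wrt F G I (\<lambda>t. A t (Z t))" and t: "t \<in> I"
  shows "(Z has_vector_derivative 0) (at t within I)"
proof (rule has_vector_derivative_nontrivialI)
  assume nontriv: "at t within I \<noteq> bot"
  obtain Y' where Y': "((\<lambda>s. A s (Z s)) has_vector_derivative Y') (at t within I)" "Y' \<in> G t"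
    using par t unfolding parallel_wrt_def by blast
  have "((\<lambda>s. Z s \<bullet> b) has_vector_derivative 0) (at t within I)" for b
  proof -
    \<comment> \<open>\<open>Z s \<bullet> b = A s (Z s) \<bullet> A s y\<close> for the projection \<open>y\<close> of \<open>b\<close> onto \<open>U\<close>.\<close>
    obtain y z where y: "y \<in> span U" and z: "\<And>w. w \<in> span U \<Longrightarrow> orthogonal z w" and b: "b = y + z"
      using orthogonal_subspace_decomp_exists[where S = U and x = b] by blast
    have yU: "y \<in> U" using y by (simp add: span_eq_iff[THEN iffD2, OF U])
    obtain d where d: "d \<in> G t" "((\<lambda>s. A s y) has_vector_derivative d) (at t within I)"
      using deriv[OF t nontriv yU] by blast
    have "((\<lambda>s. A s (Z s) \<bullet> A s y) has_vector_derivative A t (Z t) \<bullet> d + Y' \<bullet> A t y) (at t within I)"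
      by (rule bounded_bilinear.has_vector_derivative[OF bounded_bilinear_inner Y'(1) d(2)])
    moreover have "A t (Z t) \<bullet> d = 0" by (rule orth[OF t maps[OF t Z[OF t]] d(1)])
    moreover have "Y' \<bullet> A t y = 0"
      using orth[OF t maps[OF t yU] Y'(2)] by (simp add: inner_commute)
    ultimately have D: "((\<lambda>s. A s (Z s) \<bullet> A s y) has_vector_derivative 0) (at t within I)"
      by simp
    show ?thesis
    proof (rule has_vector_derivative_transform[OF t _ D])
      fix s assume s: "s \<in> I"
      have "Z s \<bullet> z = 0"
        using z[OF span_base[OF Z[OF s]]] by (simp add: orthogonal_def inner_commute)
      then show "Z s \<bullet> b = A s (Z s) \<bullet> A s y"
        using isom[OF s Z[OF s] yU] by (simp add: b inner_add_right)
    qed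
  qed
  then show ?thesis
    by (simp add: has_vector_derivative_def has_derivative_componentwise_within[of Z])
qed

lemma deriv_zero_imp_parallel_wrt_transport:
  assumes I: "is_interval I" and Z: "\<And>t. t \<in> I \<Longrightarrow> Z t \<in> U"
    and maps: "\<And>t u. t \<in> I \<Longrightarrow> u \<in> U \<Longrightarrow> A t u \<in> F t"
    and zero: "\<And>t. t \<in> I \<Longrightarrow> 0 \<in> G t"
    and deriv: "\<And>t u. t \<in> I \<Longrightarrow> at t within I \<noteq> bot \<Longrightarrow> u \<in> U \<Longrightarrow>
      \<exists>d\<in>G t. ((\<lambda>s. A s u) has_vector_derivative d) (at t within I)"
    and Z0: "\<forall>t\<in>I. (Z has_vector_derivative 0) (at t within I)"
  shows "parallel_wrt F G I (\<lambda>t. A t (Z t))"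
proof -
  obtain c where c: "\<And>s. s \<in> I \<Longrightarrow> Z s = c"
    using has_vector_derivative_zero_constant[OF is_interval_convex[OF I]] Z0 by blast
  have "\<exists>d\<in>G t. ((\<lambda>s. A s (Z s)) has_vector_derivative d) (at t within I)" if t: "t \<in> I" for t
  proof (cases "at t within I = bot")
    case True
    then show ?thesis using zero[OF t] has_vector_derivative_at_bot by blast
  next
    case False
    then obtain d where "d \<in> G t" "((\<lambda>s. A s c) has_vector_derivative d) (at t within I)"
      using deriv[OF t False] Z[OF t] c[OF t] by auto
    then show ?thesis
      using has_vector_derivative_transform[OF t, of "\<lambda>s. A s (Z s)" "\<lambda>s. A s c"] c by auto
  qed
  then obtain Y' where "\<forall>t\<in>I. Y' t \<in> G t \<and> ((\<lambda>s. A s (Z s)) has_vector_derivative Y' t) (at t within I)"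
    by (metis bchoice)
  then show ?thesis
    unfolding parallel_wrt_def using maps Z by blast
qed

lemma lin_isom_parallel_wrt_iff:
  fixes A :: "real \<Rightarrow> real^'k^'n \<Rightarrow> real^'k^'n"
  assumes I: "is_interval I" and U: "subspace U" and Z_in: "\<forall>t\<in>I. Z t \<in> U"
    and isom: "\<And>t. t \<in> I \<Longrightarrow> lin_isom eucl_metric eucl_metric U (F t) (A t)"
    and orth: "\<And>t f g. f \<in> F t \<Longrightarrow> g \<in> G t \<Longrightarrow> f \<bullet> g = 0"
    and zero: "\<And>t. 0 \<in> G t"
    and orth_fixed: "\<And>u v. u \<in> U \<Longrightarrow> v \<in> V \<Longrightarrow> u \<bullet> v = 0" and "0 \<in> V"
    and deriv: "\<And>t u. t \<in> I \<Longrightarrow> at t within I \<noteq> bot \<Longrightarrow> u \<in> U \<Longrightarrow>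
      \<exists>d\<in>G t. ((\<lambda>s. A s u) has_vector_derivative d) (at t within I)"
  shows "parallel_wrt F G I (\<lambda>t. A t (Z t)) \<longleftrightarrow> parallel_wrt (\<lambda>_. U) (\<lambda>_. V) I Z"
proof -
  have Z: "\<And>t. t \<in> I \<Longrightarrow> Z t \<in> U"
    using Z_in by blast
  have maps: "\<And>t u. t \<in> I \<Longrightarrow> u \<in> U \<Longrightarrow> A t u \<in> F t"
    using isom lin_isom_mem by blast
  have inner: "\<And>t u v. t \<in> I \<Longrightarrow> u \<in> U \<Longrightarrow> v \<in> U \<Longrightarrow> A t u \<bullet> A t v = u \<bullet> v"
    using isom lin_isom_metric by (fastforce simp: eucl_metric_eq_inner)
  have const_iff: "parallel_wrt (\<lambda>_. U) (\<lambda>_. V) I Z \<longleftrightarrow> (\<forall>t\<in>I. (Z has_vector_derivative 0) (at t within I))"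
    using parallel_wrt_const_iff[where Z = Z and U = U and V = V, OF Z \<open>0 \<in> V\<close> orth_fixed] .
  show ?thesis
  proof
    assume par: "parallel_wrt F G I (\<lambda>t. A t (Z t))"
    have "(Z has_vector_derivative 0) (at t within I)" if "t \<in> I" for t
      using U Z maps inner orth deriv par that by (rule parallel_wrt_transport_imp_deriv_zero) blast
    then show "parallel_wrt (\<lambda>_. U) (\<lambda>_. V) I Z"
      using const_iff by blast
  next
    assume "parallel_wrt (\<lambda>_. U) (\<lambda>_. V) I Z"
    then have "\<forall>t\<in>I. (Z has_vector_derivative 0) (at t within I)"
      using const_iff by blast
    with I Z maps zero deriv show "parallel_wrt F G I (\<lambda>t. A t (Z t))"
      by (rule deriv_zero_imp_parallel_wrt_transport) blast
  qed
qed

lemma Stiefel_transpose_mult: "X \<in> Stiefel \<Longrightarrow> transpose X ** X = mat 1"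
  by (simp add: Stiefel_def)

lemma Stiefel_transpose_mult_cancel: "X \<in> Stiefel \<Longrightarrow> transpose X ** (X ** M) = M"
  by (simp add: Stiefel_def matrix_mul_assoc)

lemma StT_iff: "V \<in> StT X \<longleftrightarrow> transpose V ** X = - (transpose X ** V)"
  by (auto simp: StT_def eq_neg_iff_add_eq_0 add.commute)

lemma StT_mult: "V \<in> StT X \<Longrightarrow> transpose V ** (X ** M) = - (transpose X ** (V ** M))"
  by (simp add: StT_iff matrix_mul_assoc matrix_mul_lneg)

lemma gcompl_eucl_metric_StT: "gcompl eucl_metric (StT Y) = StN Y"
  by (auto simp: gcompl_eucl_metric_iff StN_def frob_eq_inner)

lemma subspace_StT: "subspace (StT X)"
  unfolding subspace_def
proof (intro conjI ballI allI)
  show "0 \<in> StT X" by (simp add: StT_def transpose_zero)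
next
  fix V W assume "V \<in> StT X" "W \<in> StT X"
  then show "V + W \<in> StT X" by (simp add: StT_def matrix_ring_simps algebra_simps)
next
  fix c V assume "V \<in> StT X"
  then have "c *\<^sub>R (transpose X ** V + transpose V ** X) = 0" by (simp add: StT_def)
  then show "c *\<^sub>R V \<in> StT X" by (simp add: StT_def matrix_ring_simps scaleR_right_distrib)
qed

lemma subspace_StN: "subspace (StN X)"
proof -
  have "StN X = {N. \<forall>V\<in>StT X. orthogonal V N}"
    unfolding StN_def frob_eq_inner orthogonal_def by (simp add: inner_commute)
  then show ?thesis
    using subspace_orthogonal_to_vectors by simp
qed

lemma sym_mult_StN: assumes "transpose S = S" shows "X ** S \<in> StN X"
  unfolding StN_def
proof safe
  fix V assume V: "V \<in> StT X"
  have "frob (X ** S) V = trace (S ** (transpose X ** V))"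
    using assms by (simp add: frob_def matrix_transpose_mul matrix_mul_assoc)
  also have "\<dots> = 0" using V assms
    by (intro trace_sym_skew_mult) (auto simp: StT_iff matrix_transpose_mul)
  finally show "frob (X ** S) V = 0" .
qed

lemma diff_PperpSt_StT: "X \<in> Stiefel \<Longrightarrow> M - PperpSt X M \<in> StT X"
  by (simp add: StT_def PperpSt_def Stiefel_transpose_mult Stiefel_transpose_mult_cancel
      matrix_ring_simps algebra_simps)

section \<open>The reductive decomposition and the identification of T_X St(n,k) with p\<close>

lemma gprod_diff_left: "gprod (a - b) c = gprod a c - gprod b c"
  by (simp add: gprod_def matrix_diff_rdistrib trace_sub)

lemma pset_gset: "a \<in> pset X \<Longrightarrow> a \<in> gset"
  by (simp add: pset_def)

lemma pset_diff: "a \<in> pset X \<Longrightarrow> b \<in> pset X \<Longrightarrow> a - b \<in> pset X"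
  by (auto simp: pset_def gset_def gprod_diff_left transpose_diff)

lemma gset_transpose_snd: "a \<in> gset \<Longrightarrow> transpose (snd a) = - snd a"
  by (cases a) (simp add: gset_def)

lemma ad_gset: "a \<in> gset \<Longrightarrow> b \<in> gset \<Longrightarrow> ad a b \<in> gset"
  by (auto simp: gset_def ad_def matrix_ring_simps)

(* The identification of T_X St(n,k) with p used in the paper: u(t) = hlift X (beta' t).
   Its inverse is eta |-> f_act eta X. *)
definition hlift :: "real^'k^'n \<Rightarrow> real^'k^'n \<Rightarrow> (real^'n^'n) \<times> (real^'k^'k)" where
  "hlift X V = (V ** transpose X - X ** transpose V, transpose X ** V)"

lemma linear_hlift: "linear (hlift X)"
  by (rule linearI) (simp_all add: hlift_def matrix_ring_simps algebra_simps)

lemma linear_f_act_left: "linear (\<lambda>\<eta>. f_act \<eta> V)"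
  by (rule linearI) (simp_all add: f_act_def matrix_ring_simps algebra_simps)

lemma f_act_hlift:
  assumes X: "X \<in> Stiefel" and V: "V \<in> StT X"
  shows "f_act (hlift X V) X = V"
proof -
  have "f_act (hlift X V) X = V - X ** (transpose V ** X + transpose X ** V)"
    using X by (simp add: f_act_def hlift_def Stiefel_transpose_mult Stiefel_transpose_mult_cancel
        matrix_ring_simps algebra_simps)
  also have "\<dots> = V" using V by (simp add: StT_iff)
  finally show ?thesis .
qed

lemma f_act_StT:
  assumes X: "X \<in> Stiefel" and \<eta>: "\<eta> \<in> gset"
  shows "f_act \<eta> X \<in> StT X"
proof -
  obtain a b where "\<eta> = (a, b)" "transpose a = - a" "transpose b = - b"
    using \<eta> by (auto simp: gset_def)
  then show ?thesis
    using X by (simp add: StT_def f_act_def Stiefel_transpose_mult Stiefel_transpose_mult_cancel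
        matrix_ring_simps)
qed

lemma hlift_f_act:
  assumes X: "X \<in> Stiefel" and \<eta>: "\<eta> \<in> gset"
  shows "hlift X (f_act \<eta> X) = pr_p X \<eta>"
proof -
  obtain a b where "\<eta> = (a, b)" "transpose a = - a" "transpose b = - b"
    using \<eta> by (auto simp: gset_def)
  then show ?thesis
    using X by (simp add: pr_p_def hlift_def f_act_def Stiefel_transpose_mult
        Stiefel_transpose_mult_cancel matrix_ring_simps algebra_simps scaleR_2)
qed

lemma hlift_pset:
  assumes X: "X \<in> Stiefel" and V: "V \<in> StT X"
  shows "hlift X V \<in> pset X"
proof -
  have "gprod (hlift X V) w = 0" if w: "w \<in> hset X" for w
  proof -
    obtain \<Omega> \<eta> where w': "w = (\<Omega>, \<eta>)" "transpose \<Omega> = - \<Omega>" "transpose \<eta> = - \<eta>"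
      "\<Omega> ** X = X ** \<eta>"
      using w by (auto simp: hset_def gset_def)
    have "transpose X ** transpose \<Omega> = transpose \<eta> ** transpose X"
      using w'(4) by (metis matrix_transpose_mul)
    then have XtO: "transpose X ** \<Omega> = \<eta> ** transpose X"
      using w' by (simp add: matrix_mul_lneg matrix_mul_rneg)
    have t1: "trace (V ** (transpose X ** \<Omega>)) = trace (transpose X ** (V ** \<eta>))"
      unfolding XtO using trace_mul_sym[of "V ** \<eta>" "transpose X"] by (simp add: matrix_mul_assoc)
    have "trace (X ** (transpose V ** \<Omega>)) = trace (transpose V ** (\<Omega> ** X))"
      by (subst trace_mul_sym) (simp only: matrix_mul_assoc)
    also have "\<dots> = - trace (transpose X ** (V ** \<eta>))"
      using V w' by (simp add: StT_mult trace_uminus)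
    finally show ?thesis
      using t1 w' by (simp add: gprod_def hlift_def matrix_ring_simps trace_sub)
  qed
  moreover have "hlift X V \<in> gset"
    using V by (simp add: gset_def hlift_def matrix_ring_simps StT_iff)
  ultimately show ?thesis by (simp add: pset_def)
qed

(* The test element (X e2 X^T - Q e1 Q, e2) of h, with Q = I - X X^T, paired with
   (e1, e2) in p gives |Q e1 Q|^2 + |e2|^2 = 0. *)
lemma pset_inter_hset:
  assumes X: "X \<in> Stiefel" and p: "e \<in> pset X" and h: "e \<in> hset X"
  shows "e = 0"
proof -
  obtain e1 e2 where e: "e = (e1, e2)" "transpose e1 = - e1" "transpose e2 = - e2" "e1 ** X = X ** e2"
    using h by (auto simp: hset_def gset_def)
  have XtX: "transpose X ** X = mat 1" using X by (simp add: Stiefel_def)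
  define Q where "Q = mat 1 - X ** transpose X"
  have QT: "transpose Q = Q" by (simp add: Q_def matrix_ring_simps)
  have QX: "Q ** X = 0" by (simp add: Q_def matrix_ring_simps XtX)
  have QQ: "Q ** Q = Q" using X by (simp add: Q_def matrix_ring_simps Stiefel_transpose_mult_cancel)
  define P where "P = Q ** e1 ** Q"
  have PT: "transpose P = - P" by (simp add: P_def matrix_ring_simps QT e)
  define w where "w = (X ** e2 ** transpose X - P, e2)"
  have "w \<in> hset X"
  proof -
    have "transpose (X ** e2 ** transpose X) = - (X ** e2 ** transpose X)"
      by (simp add: matrix_ring_simps e)
    moreover have "(X ** e2 ** transpose X - P) ** X = X ** e2"
      by (simp add: P_def matrix_ring_simps XtX QX[unfolded matrix_mul_assoc[symmetric]])
    ultimately show ?thesis using e PT by (simp add: hset_def gset_def w_def transpose_diff)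
  qed
  then have "gprod e w = 0" using p by (auto simp: pset_def)
  moreover have "gprod e w = - trace (e1 ** (X ** e2 ** transpose X)) + trace (e1 ** P) + 2 * trace (e2 ** e2)"
    by (simp add: gprod_def w_def e matrix_diff_ldistrib trace_sub)
  moreover have "trace (e1 ** (X ** e2 ** transpose X)) = trace (e2 ** e2)"
  proof -
    have "trace (e1 ** (X ** e2 ** transpose X)) = trace ((X ** e2 ** e2) ** transpose X)"
      by (simp add: matrix_mul_assoc e(4))
    also have "\<dots> = trace (transpose X ** (X ** e2 ** e2))" by (rule trace_mul_sym)
    finally show ?thesis by (simp add: matrix_mul_assoc XtX)
  qed
  moreover have "trace (e1 ** P) = trace (P ** P)"
  proof -
    have "trace (P ** P) = trace (Q ** (e1 ** (Q ** (Q ** (e1 ** Q)))))"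
      by (simp add: P_def matrix_mul_assoc)
    also have "\<dots> = trace (Q ** (e1 ** (Q ** (e1 ** Q))))"
      by (simp add: matrix_mul_assoc QQ)
    also have "\<dots> = trace ((e1 ** (Q ** (e1 ** Q))) ** Q)" by (rule trace_mul_sym)
    also have "\<dots> = trace (e1 ** P)" by (simp add: P_def matrix_mul_assoc[symmetric] QQ)
    finally show ?thesis by simp
  qed
  ultimately have "P \<bullet> P + e2 \<bullet> e2 = 0"
    by (simp add: inner_self_eq_trace PT e matrix_mul_lneg trace_uminus)
  then have "P \<bullet> P = 0 \<and> e2 \<bullet> e2 = 0"
    using add_nonneg_eq_0_iff[OF inner_ge_zero inner_ge_zero] by blast
  then have P0: "P = 0" and e20: "e2 = 0" by simp_all
  have e1X: "e1 ** X = 0" using e e20 by simp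
  have Xte1: "transpose X ** e1 = 0"
  proof -
    have "transpose (e1 ** X) = 0" using e1X by (simp add: transpose_zero)
    then show ?thesis using e(2) by (simp add: matrix_transpose_mul matrix_mul_rneg)
  qed
  have "P = e1 - e1 ** X ** transpose X - X ** (transpose X ** e1) + X ** (transpose X ** e1) ** X ** transpose X"
    by (simp add: P_def Q_def matrix_diff_ldistrib matrix_diff_rdistrib matrix_mul_assoc)
  then have "P = e1" by (simp add: e1X Xte1)
  then show ?thesis using P0 e20 e by (simp add: zero_prod_def)
qed

lemma pr_p_pset:
  assumes X: "X \<in> Stiefel" and e: "e \<in> pset X"
  shows "pr_p X e = e"
proof -
  obtain e1 e2 where ee: "e = (e1, e2)" "transpose e1 = - e1" "transpose e2 = - e2"
    using pset_gset[OF e] by (auto simp: gset_def)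
  have "pr_p X e \<in> pset X"
    using hlift_f_act[OF X pset_gset[OF e]] hlift_pset[OF X f_act_StT[OF X pset_gset[OF e]]] by simp
  then have dp: "e - pr_p X e \<in> pset X" using e by (rule pset_diff[rotated])
  have "fst (e - pr_p X e) ** X = X ** snd (e - pr_p X e)"
    using X by (simp add: ee pr_p_def Stiefel_transpose_mult Stiefel_transpose_mult_cancel
        matrix_ring_simps algebra_simps)
      (simp add: matrix_numeral_2_times matrix_numeral_2_times' matrix_mul_scaleR_right)
  then have "e - pr_p X e \<in> hset X" using pset_gset[OF dp] by (cases "e - pr_p X e") (simp add: hset_def)
  then show ?thesis using pset_inter_hset[OF X dp] by simp
qed

lemma hlift_f_act_pset: "X \<in> Stiefel \<Longrightarrow> \<eta> \<in> pset X \<Longrightarrow> hlift X (f_act \<eta> X) = \<eta>"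
  by (simp add: hlift_f_act pr_p_pset pset_gset)

lemma f_act_pr_p:
  assumes X: "X \<in> Stiefel" and a: "a \<in> gset"
  shows "f_act (pr_p X a) X = f_act a X"
  using hlift_f_act[OF X a] f_act_hlift[OF X f_act_StT[OF X a]] by simp

lemma gprod_hlift:
  assumes X: "X \<in> Stiefel" and V: "V \<in> StT X" and W: "W \<in> StT X"
  shows "gprod (hlift X V) (hlift X W) = eucl_metric V W"
proof -
  have XtX: "transpose X ** X = mat 1" using X by (simp add: Stiefel_def)
  have trace_VWt: "trace (A ** transpose B) = trace (transpose A ** B)" for A B :: "real^'k^'n"
  proof -
    have "trace (A ** transpose B) = trace (transpose (A ** transpose B))" by (simp add: trace_transpose)
    also have "\<dots> = trace (B ** transpose A)" by (simp add: matrix_transpose_mul)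
    also have "\<dots> = trace (transpose A ** B)" by (rule trace_mul_sym)
    finally show ?thesis .
  qed
  have e1: "trace (V ** (transpose X ** (W ** transpose X))) = trace (transpose X ** (V ** (transpose X ** W)))"
    using trace_mul_sym[of "V ** (transpose X ** W)" "transpose X"] by (simp add: matrix_mul_assoc)
  have e2: "trace (V ** (transpose X ** (X ** transpose W))) = trace (transpose V ** W)"
    by (simp add: matrix_mul_assoc XtX trace_VWt)
  have e3: "trace (X ** (transpose V ** (W ** transpose X))) = trace (transpose V ** W)"
    using trace_mul_sym[of X "transpose V ** (W ** transpose X)"] by (simp add: matrix_mul_assoc[symmetric] XtX)
  have "trace (X ** (transpose V ** (X ** transpose W))) = trace ((transpose V ** X) ** (transpose W ** X))"
    using trace_mul_sym[of X "transpose V ** (X ** transpose W)"] by (simp add: matrix_mul_assoc)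
  also have "\<dots> = trace (transpose X ** (V ** (transpose X ** W)))"
    using V W by (simp add: StT_iff matrix_mul_rneg matrix_mul_lneg matrix_mul_assoc)
  finally have e4: "trace (X ** (transpose V ** (X ** transpose W))) = trace (transpose X ** (V ** (transpose X ** W)))" .
  show ?thesis using e1 e2 e3 e4
    by (simp add: gprod_def hlift_def eucl_metric_def matrix_ring_simps trace_sub trace_add trace_uminus)
qed

lemma lin_isom_hlift:
  assumes "X \<in> Stiefel"
  shows "lin_isom eucl_metric gprod (StT X) (pset X) (hlift X)"
  using assms
  by (intro lin_isom_linearI[OF linear_hlift linear_f_act_left[of X]])
    (simp_all add: hlift_pset f_act_StT pset_gset f_act_hlift hlift_f_act_pset gprod_hlift)

lemma lin_isom_f_act:
  assumes X: "X \<in> Stiefel"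
  shows "lin_isom gprod eucl_metric (pset X) (StT X) (\<lambda>\<eta>. f_act \<eta> X)"
proof (intro lin_isom_linearI[OF linear_f_act_left linear_hlift[of X]])
  fix \<eta> \<zeta> assume "\<eta> \<in> pset X" "\<zeta> \<in> pset X"
  then show "eucl_metric (f_act \<eta> X) (f_act \<zeta> X) = gprod \<eta> \<zeta>"
    using gprod_hlift[OF X] by (metis X f_act_StT hlift_f_act_pset pset_gset)
qed (use X in \<open>simp_all add: hlift_pset f_act_StT pset_gset f_act_hlift hlift_f_act_pset\<close>)

lemma f_act_hlift_minus_half_ad:
  assumes X: "X \<in> Stiefel" and A: "A \<in> StT X" and B: "B \<in> StT X"
  shows "f_act (hlift X A) B - (1/2) *\<^sub>R f_act (ad (hlift X A) (hlift X B)) X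
     = - (1/2) *\<^sub>R (X ** (transpose A ** B + transpose B ** A))"
proof -
  have a1: "transpose A ** X = - (transpose X ** A)" and b1: "transpose B ** X = - (transpose X ** B)"
    using A B by (simp_all add: StT_iff)
  have a2: "transpose A ** (X ** M) = - (transpose X ** (A ** M))"
    and b2: "transpose B ** (X ** M) = - (transpose X ** (B ** M))" for M
    using A B by (simp_all add: StT_mult)
  show ?thesis
    using X by (simp add: f_act_def hlift_def ad_def Stiefel_transpose_mult Stiefel_transpose_mult_cancel
        matrix_ring_simps a1 b1 a2 b2 algebra_simps)
qed

lemma f_act_minus_half_ad_StN:
  assumes X: "X \<in> Stiefel" and \<xi>: "\<xi> \<in> pset X" and \<eta>: "\<eta> \<in> pset X"
  shows "f_act \<xi> (f_act \<eta> X) - (1/2) *\<^sub>R f_act (ad \<xi> \<eta>) X \<in> StN X"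
proof -
  define A B where "A = f_act \<xi> X" and "B = f_act \<eta> X"
  have A: "A \<in> StT X" and B: "B \<in> StT X"
    unfolding A_def B_def using X \<xi> \<eta> by (simp_all add: f_act_StT pset_gset)
  have "\<xi> = hlift X A" "\<eta> = hlift X B"
    unfolding A_def B_def using X \<xi> \<eta> by (simp_all add: hlift_f_act_pset)
  then have "f_act \<xi> (f_act \<eta> X) - (1/2) *\<^sub>R f_act (ad \<xi> \<eta>) X
      = X ** (- (1/2) *\<^sub>R (transpose A ** B + transpose B ** A))"
    using f_act_hlift_minus_half_ad[OF X A B] f_act_hlift[OF X B]
    by (simp add: B_def matrix_mul_scaleR_right matrix_mul_rneg)
  moreover have "transpose (- (1/2) *\<^sub>R (transpose A ** B + transpose B ** A))
      = - (1/2) *\<^sub>R (transpose A ** B + transpose B ** A)"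
    by (simp add: matrix_ring_simps)
  ultimately show ?thesis
    using sym_mult_StN[of "- (1/2) *\<^sub>R (transpose A ** B + transpose B ** A)" X] by simp
qed

section \<open>The action of O(n) x O(k)\<close>

definition \<Phi> :: "real^'n^'n \<Rightarrow> real^'k^'k \<Rightarrow> real^'k^'n \<Rightarrow> real^'k^'n" where
  "\<Phi> R \<theta> M = R ** M ** transpose \<theta>"

lemma \<Phi>_transpose_\<Phi>:
  "orthogonal_matrix R \<Longrightarrow> orthogonal_matrix \<theta> \<Longrightarrow> \<Phi> (transpose R) (transpose \<theta>) (\<Phi> R \<theta> M) = M"
  by (simp add: \<Phi>_def matrix_mul_assoc[symmetric] orthogonal_matrix_mult_cancel)

lemma inner_\<Phi>_left: "\<Phi> R \<theta> V \<bullet> W = V \<bullet> \<Phi> (transpose R) (transpose \<theta>) W"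
proof -
  have "trace (transpose (\<Phi> R \<theta> V) ** W) = trace (\<theta> ** (transpose V ** (transpose R ** W)))"
    by (simp add: \<Phi>_def matrix_transpose_mul matrix_mul_assoc)
  also have "\<dots> = trace ((transpose V ** (transpose R ** W)) ** \<theta>)" by (rule trace_mul_sym)
  finally show ?thesis
    by (simp add: frob_eq_inner[symmetric] frob_def \<Phi>_def matrix_mul_assoc)
qed

lemma inner_\<Phi>:
  "orthogonal_matrix R \<Longrightarrow> orthogonal_matrix \<theta> \<Longrightarrow> \<Phi> R \<theta> V \<bullet> \<Phi> R \<theta> W = V \<bullet> W"
  by (simp add: inner_\<Phi>_left \<Phi>_transpose_\<Phi>)

lemma linear_\<Phi>: "linear (\<Phi> R \<theta>)"
  by (rule linearI) (simp_all add: \<Phi>_def matrix_ring_simps)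

lemma \<Phi>_Stiefel:
  "orthogonal_matrix R \<Longrightarrow> orthogonal_matrix \<theta> \<Longrightarrow> X \<in> Stiefel \<Longrightarrow> \<Phi> R \<theta> X \<in> Stiefel"
  by (simp add: Stiefel_def \<Phi>_def matrix_transpose_mul matrix_mul_assoc[symmetric]
      orthogonal_matrix_mult_cancel Stiefel_transpose_mult_cancel)

lemma \<Phi>_StT:
  assumes R: "orthogonal_matrix R" and \<theta>: "orthogonal_matrix \<theta>" and V: "V \<in> StT X"
  shows "\<Phi> R \<theta> V \<in> StT (\<Phi> R \<theta> X)"
proof -
  have "transpose (\<Phi> R \<theta> X) ** \<Phi> R \<theta> V + transpose (\<Phi> R \<theta> V) ** \<Phi> R \<theta> X
      = \<theta> ** (transpose X ** V + transpose V ** X) ** transpose \<theta>"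
    using R by (simp add: \<Phi>_def matrix_ring_simps orthogonal_matrix_mult_cancel)
  then show ?thesis using V by (simp add: StT_def)
qed

lemma \<Phi>_StN:
  assumes R: "orthogonal_matrix R" and \<theta>: "orthogonal_matrix \<theta>" and N: "N \<in> StN X"
  shows "\<Phi> R \<theta> N \<in> StN (\<Phi> R \<theta> X)"
  unfolding StN_def frob_eq_inner
proof safe
  fix U assume "U \<in> StT (\<Phi> R \<theta> X)"
  then have "\<Phi> (transpose R) (transpose \<theta>) U \<in> StT (\<Phi> (transpose R) (transpose \<theta>) (\<Phi> R \<theta> X))"
    using R \<theta> by (simp add: \<Phi>_StT)
  then have "\<Phi> (transpose R) (transpose \<theta>) U \<in> StT X"
    using R \<theta> by (simp add: \<Phi>_transpose_\<Phi>)
  then show "\<Phi> R \<theta> N \<bullet> U = 0"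
    using N by (simp add: inner_\<Phi>_left StN_def frob_eq_inner)
qed

lemma lin_isom_\<Phi>:
  assumes R: "orthogonal_matrix R" and \<theta>: "orthogonal_matrix \<theta>"
    and equivariant: "\<And>R \<theta> Y M. orthogonal_matrix R \<Longrightarrow> orthogonal_matrix \<theta> \<Longrightarrow> M \<in> P Y
      \<Longrightarrow> \<Phi> R \<theta> M \<in> P (\<Phi> R \<theta> Y)"
  shows "lin_isom eucl_metric eucl_metric (P X) (P (\<Phi> R \<theta> X)) (\<Phi> R \<theta>)"
proof (rule lin_isom_linearI[OF linear_\<Phi> linear_\<Phi>])
  fix M assume "M \<in> P X"
  then show "\<Phi> R \<theta> M \<in> P (\<Phi> R \<theta> X)" by (rule equivariant[OF R \<theta>])
next
  fix M assume "M \<in> P (\<Phi> R \<theta> X)"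
  then have "\<Phi> (transpose R) (transpose \<theta>) M \<in> P (\<Phi> (transpose R) (transpose \<theta>) (\<Phi> R \<theta> X))"
    using R \<theta> by (intro equivariant) simp_all
  then show "\<Phi> (transpose R) (transpose \<theta>) M \<in> P X"
    by (simp only: \<Phi>_transpose_\<Phi>[OF R \<theta>])
next
  fix M show "\<Phi> (transpose R) (transpose \<theta>) (\<Phi> R \<theta> M) = M"
    by (rule \<Phi>_transpose_\<Phi>[OF R \<theta>])
next
  fix M show "\<Phi> R \<theta> (\<Phi> (transpose R) (transpose \<theta>) M) = M"
    using \<Phi>_transpose_\<Phi>[of "transpose R" "transpose \<theta>"] R \<theta> by simp
next
  fix V W show "eucl_metric (\<Phi> R \<theta> V) (\<Phi> R \<theta> W) = eucl_metric V W"
    by (simp add: eucl_metric_eq_inner inner_\<Phi>[OF R \<theta>])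
qed

lemma has_vector_derivative_\<Phi>:
  assumes R': "(R has_vector_derivative R t ** fst \<xi>) (at t within I)"
    and \<theta>': "(\<theta> has_vector_derivative \<theta> t ** snd \<xi>) (at t within I)"
    and skew: "transpose (snd \<xi>) = - snd \<xi>"
    and W': "(W has_vector_derivative W') (at t within I)"
  shows "((\<lambda>s. \<Phi> (R s) (\<theta> s) (W s)) has_vector_derivative \<Phi> (R t) (\<theta> t) (f_act \<xi> (W t) + W'))
    (at t within I)"
proof -
  have "((\<lambda>s. R s ** W s ** transpose (\<theta> s)) has_vector_derivative
      R t ** W t ** transpose (\<theta> t ** snd \<xi>) + (R t ** W' + R t ** fst \<xi> ** W t) ** transpose (\<theta> t))
      (at t within I)"
    by (rule has_vector_derivative_matrix_mult[OF has_vector_derivative_matrix_mult[OF R' W']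
          has_vector_derivative_transpose[OF \<theta>']])
  moreover have "R t ** W t ** transpose (\<theta> t ** snd \<xi>) + (R t ** W' + R t ** fst \<xi> ** W t) ** transpose (\<theta> t)
      = \<Phi> (R t) (\<theta> t) (f_act \<xi> (W t) + W')"
    using skew by (simp add: \<Phi>_def f_act_def matrix_ring_simps algebra_simps)
  ultimately show ?thesis by (simp add: \<Phi>_def)
qed

lemma has_vector_derivative_\<Phi>_const:
  assumes R': "(R has_vector_derivative R t ** fst \<xi>) (at t within I)"
    and \<theta>': "(\<theta> has_vector_derivative \<theta> t ** snd \<xi>) (at t within I)"
    and \<xi>: "at t within I \<noteq> bot \<Longrightarrow> \<xi> \<in> gset"
  shows "((\<lambda>s. \<Phi> (R s) (\<theta> s) X) has_vector_derivative \<Phi> (R t) (\<theta> t) (f_act \<xi> X)) (at t within I)"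
proof (rule has_vector_derivative_nontrivialI)
  assume "at t within I \<noteq> bot"
  from has_vector_derivative_\<Phi>[OF R' \<theta>' gset_transpose_snd[OF \<xi>[OF this]] has_vector_derivative_const]
  show ?thesis by simp
qed

section \<open>The rolling frames\<close>

lemma lin_isom_tangent_frame:
  assumes X: "X \<in> Stiefel" and R: "orthogonal_matrix R" and \<theta>: "orthogonal_matrix \<theta>"
    and S: "O_p X S"
  shows "lin_isom eucl_metric eucl_metric (StT X) (StT (\<Phi> R \<theta> X))
    (\<lambda>V. \<Phi> R \<theta> (f_act (S (hlift X V)) X))"
proof -
  have "lin_isom eucl_metric eucl_metric (StT X) (StT (\<Phi> R \<theta> X))
      (\<Phi> R \<theta> \<circ> ((\<lambda>\<eta>. f_act \<eta> X) \<circ> (S \<circ> hlift X)))"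
    using lin_isom_comp[OF lin_isom_comp[OF lin_isom_comp[OF lin_isom_hlift[OF X] S[unfolded O_p_def]]
        lin_isom_f_act[OF X]] lin_isom_\<Phi>[OF R \<theta> \<Phi>_StT]] .
  then show ?thesis by (simp add: comp_def)
qed

lemma lin_isom_normal_frame:
  assumes R: "orthogonal_matrix R" and \<theta>: "orthogonal_matrix \<theta>" and T: "O_N X T"
  shows "lin_isom eucl_metric eucl_metric (gcompl eucl_metric (StT X))
    (gcompl eucl_metric (StT (\<Phi> R \<theta> X))) (\<lambda>W. \<Phi> R \<theta> (T W))"
  unfolding gcompl_eucl_metric_StT
  using lin_isom_comp[OF T[unfolded O_N_def] lin_isom_\<Phi>[OF R \<theta> \<Phi>_StN]] by (simp add: comp_def)

lemma has_vector_derivative_tangent_frame: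
  fixes S :: "real \<Rightarrow> (real^'n^'n) \<times> (real^'k^'k)"
  assumes X: "X \<in> Stiefel" and \<xi>: "\<xi> \<in> pset X" and St: "S t \<in> pset X"
    and R: "orthogonal_matrix (R t)" and \<theta>: "orthogonal_matrix (\<theta> t)"
    and R': "(R has_vector_derivative R t ** fst \<xi>) (at t within I)"
    and \<theta>': "(\<theta> has_vector_derivative \<theta> t ** snd \<xi>) (at t within I)"
    and S': "(S has_vector_derivative - (1/2) *\<^sub>R pr_p X (ad \<xi> (S t))) (at t within I)"
  shows "\<exists>d\<in>gcompl eucl_metric (StT (\<Phi> (R t) (\<theta> t) X)).
    ((\<lambda>s. \<Phi> (R s) (\<theta> s) (f_act (S s) X)) has_vector_derivative d) (at t within I)"
proof -
  have skew: "transpose (snd \<xi>) = - snd \<xi>" using pset_gset[OF \<xi>] by (rule gset_transpose_snd)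
  have "f_act (pr_p X (ad \<xi> (S t))) X = f_act (ad \<xi> (S t)) X"
    by (rule f_act_pr_p[OF X ad_gset[OF pset_gset[OF \<xi>] pset_gset[OF St]]])
  then have "((\<lambda>s. f_act (S s) X) has_vector_derivative - (1/2) *\<^sub>R f_act (ad \<xi> (S t)) X)
      (at t within I)"
    using bounded_linear.has_vector_derivative[OF linear_f_act_left[of X, unfolded linear_conv_bounded_linear] S']
    by (simp add: linear_neg[OF linear_f_act_left] linear_scale[OF linear_f_act_left])
  from has_vector_derivative_\<Phi>[OF R' \<theta>' skew this]
  have "((\<lambda>s. \<Phi> (R s) (\<theta> s) (f_act (S s) X)) has_vector_derivative
      \<Phi> (R t) (\<theta> t) (f_act \<xi> (f_act (S t) X) - (1/2) *\<^sub>R f_act (ad \<xi> (S t)) X)) (at t within I)"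
    by simp
  moreover have "\<Phi> (R t) (\<theta> t) (f_act \<xi> (f_act (S t) X) - (1/2) *\<^sub>R f_act (ad \<xi> (S t)) X)
      \<in> gcompl eucl_metric (StT (\<Phi> (R t) (\<theta> t) X))"
    unfolding gcompl_eucl_metric_StT by (intro \<Phi>_StN R \<theta> f_act_minus_half_ad_StN X \<xi> St)
  ultimately show ?thesis by blast
qed

lemma has_vector_derivative_normal_frame:
  assumes X: "X \<in> Stiefel" and \<xi>: "\<xi> \<in> gset"
    and R: "orthogonal_matrix (R t)" and \<theta>: "orthogonal_matrix (\<theta> t)"
    and R': "(R has_vector_derivative R t ** fst \<xi>) (at t within I)"
    and \<theta>': "(\<theta> has_vector_derivative \<theta> t ** snd \<xi>) (at t within I)"
    and N': "(N has_vector_derivative - PperpSt X (f_act \<xi> (N t))) (at t within I)"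
  shows "\<exists>d\<in>StT (\<Phi> (R t) (\<theta> t) X). ((\<lambda>s. \<Phi> (R s) (\<theta> s) (N s)) has_vector_derivative d) (at t within I)"
proof -
  have skew: "transpose (snd \<xi>) = - snd \<xi>" using \<xi> by (rule gset_transpose_snd)
  have "((\<lambda>s. \<Phi> (R s) (\<theta> s) (N s)) has_vector_derivative
      \<Phi> (R t) (\<theta> t) (f_act \<xi> (N t) - PperpSt X (f_act \<xi> (N t)))) (at t within I)"
    using has_vector_derivative_\<Phi>[OF R' \<theta>' skew N'] by simp
  moreover have "\<Phi> (R t) (\<theta> t) (f_act \<xi> (N t) - PperpSt X (f_act \<xi> (N t))) \<in> StT (\<Phi> (R t) (\<theta> t) X)"
    by (intro \<Phi>_StT R \<theta> diff_PperpSt_StT X)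
  ultimately show ?thesis by blast
qed

lemma hlift_velocity_pset:
  assumes X: "X \<in> Stiefel" and \<beta>: "\<forall>s\<in>I. \<beta> s \<in> StT X" and S: "O_p X S"
    and t: "t \<in> I" and nontriv: "at t within I \<noteq> bot"
    and \<beta>': "(\<beta> has_vector_derivative V) (at t within I)"
  shows "S (hlift X V) \<in> pset X"
proof -
  have "V \<in> StT X"
    using has_vector_derivative_in_subspace[OF subspace_StT _ nontriv t \<beta>'] \<beta> by blast
  then show ?thesis
    using S lin_isom_mem hlift_pset[OF X] unfolding O_p_def by blast
qed

lemma tangent_frame_parallel_wrt_iff:
  fixes S :: "real \<Rightarrow> (real^'n^'n) \<times> (real^'k^'k) \<Rightarrow> (real^'n^'n) \<times> (real^'k^'k)"
  assumes X: "X \<in> Stiefel" and I: "is_interval I"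
    and orth: "\<forall>t\<in>I. orthogonal_matrix (R t) \<and> orthogonal_matrix (\<theta> t)"
    and R': "\<forall>t\<in>I. (R has_vector_derivative R t ** fst (\<xi> t)) (at t within I)"
    and \<theta>': "\<forall>t\<in>I. (\<theta> has_vector_derivative \<theta> t ** snd (\<xi> t)) (at t within I)"
    and \<xi>: "\<forall>t\<in>I. at t within I \<noteq> bot \<longrightarrow> \<xi> t \<in> pset X"
    and S: "\<forall>t\<in>I. O_p X (S t)"
    and S': "\<forall>t\<in>I. \<forall>\<eta>\<in>pset X.
      ((\<lambda>s. S s \<eta>) has_vector_derivative - (1/2) *\<^sub>R pr_p X (ad (\<xi> t) (S t \<eta>))) (at t within I)"
    and Z: "\<forall>t\<in>I. Z t \<in> StT X"
  shows "parallel_wrt (\<lambda>t. StT (\<Phi> (R t) (\<theta> t) X)) (\<lambda>t. gcompl eucl_metric (StT (\<Phi> (R t) (\<theta> t) X))) I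
      (\<lambda>t. \<Phi> (R t) (\<theta> t) (f_act (S t (hlift X (Z t))) X))
    \<longleftrightarrow> parallel_wrt (\<lambda>_. StT X) (\<lambda>_. gcompl eucl_metric (StT X)) I Z"
proof -
  have isom: "lin_isom eucl_metric eucl_metric (StT X) (StT (\<Phi> (R t) (\<theta> t) X))
      (\<lambda>V. \<Phi> (R t) (\<theta> t) (f_act (S t (hlift X V)) X))" if "t \<in> I" for t
    using lin_isom_tangent_frame[OF X] orth S that by blast
  have deriv: "\<exists>d\<in>gcompl eucl_metric (StT (\<Phi> (R t) (\<theta> t) X)).
      ((\<lambda>s. \<Phi> (R s) (\<theta> s) (f_act (S s (hlift X V)) X)) has_vector_derivative d) (at t within I)"
    if t: "t \<in> I" and nontriv: "at t within I \<noteq> bot" and V: "V \<in> StT X" for t V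
  proof -
    have \<xi>t: "\<xi> t \<in> pset X" using \<xi> t nontriv by blast
    have \<eta>: "hlift X V \<in> pset X" using hlift_pset[OF X V] .
    then have "S t (hlift X V) \<in> pset X" using S t lin_isom_mem unfolding O_p_def by blast
    then show ?thesis
      using has_vector_derivative_tangent_frame[OF X \<xi>t _ _ _ R'[rule_format, OF t] \<theta>'[rule_format, OF t]
          S'[rule_format, OF t \<eta>]] orth t by blast
  qed
  show ?thesis
    using I subspace_StT Z isom inner_gcompl_eucl_metric_right zero_gcompl_eucl_metric
      inner_gcompl_eucl_metric_right zero_gcompl_eucl_metric deriv
    by (rule lin_isom_parallel_wrt_iff)
qed

lemma normal_frame_parallel_wrt_iff:
  assumes X: "X \<in> Stiefel" and I: "is_interval I"
    and orth: "\<forall>t\<in>I. orthogonal_matrix (R t) \<and> orthogonal_matrix (\<theta> t)"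
    and R': "\<forall>t\<in>I. (R has_vector_derivative R t ** fst (\<xi> t)) (at t within I)"
    and \<theta>': "\<forall>t\<in>I. (\<theta> has_vector_derivative \<theta> t ** snd (\<xi> t)) (at t within I)"
    and \<xi>: "\<forall>t\<in>I. at t within I \<noteq> bot \<longrightarrow> \<xi> t \<in> gset"
    and T: "\<forall>t\<in>I. O_N X (T t)"
    and T': "\<forall>t\<in>I. \<forall>W\<in>StN X.
      ((\<lambda>s. T s W) has_vector_derivative - PperpSt X (f_act (\<xi> t) (T t W))) (at t within I)"
    and Z: "\<forall>t\<in>I. Z t \<in> gcompl eucl_metric (StT X)"
  shows "parallel_wrt (\<lambda>t. gcompl eucl_metric (StT (\<Phi> (R t) (\<theta> t) X))) (\<lambda>t. StT (\<Phi> (R t) (\<theta> t) X)) I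
      (\<lambda>t. \<Phi> (R t) (\<theta> t) (T t (Z t)))
    \<longleftrightarrow> parallel_wrt (\<lambda>_. gcompl eucl_metric (StT X)) (\<lambda>_. StT X) I Z"
proof -
  have isom: "lin_isom eucl_metric eucl_metric (gcompl eucl_metric (StT X))
      (gcompl eucl_metric (StT (\<Phi> (R t) (\<theta> t) X))) (\<lambda>W. \<Phi> (R t) (\<theta> t) (T t W))" if "t \<in> I" for t
    using lin_isom_normal_frame orth T that by blast
  have deriv: "\<exists>d\<in>StT (\<Phi> (R t) (\<theta> t) X).
      ((\<lambda>s. \<Phi> (R s) (\<theta> s) (T s W)) has_vector_derivative d) (at t within I)"
    if t: "t \<in> I" and nontriv: "at t within I \<noteq> bot" and W: "W \<in> gcompl eucl_metric (StT X)" for t W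
    by (rule has_vector_derivative_normal_frame[OF X])
      (use \<xi> orth R' \<theta>' T' t nontriv W in \<open>auto simp: gcompl_eucl_metric_StT\<close>)
  show ?thesis
    using I subspace_StN[of X, folded gcompl_eucl_metric_StT] Z isom inner_gcompl_eucl_metric_left
      subspace_0[OF subspace_StT] inner_gcompl_eucl_metric_left subspace_0[OF subspace_StT] deriv
    by (rule lin_isom_parallel_wrt_iff)
qed

theorem theorem5p10:
  fixes X :: "real^'k^'n"
    and I :: "real set"
    and \<beta> \<beta>' :: "real \<Rightarrow> real^'k^'n"
    and S :: "real \<Rightarrow> (real^'n^'n) \<times> (real^'k^'k) \<Rightarrow> (real^'n^'n) \<times> (real^'k^'k)"
    and R :: "real \<Rightarrow> real^'n^'n"
    and \<theta> :: "real \<Rightarrow> real^'k^'k"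
    and T :: "real \<Rightarrow> real^'k^'n \<Rightarrow> real^'k^'n"
    and u \<xi> :: "real \<Rightarrow> (real^'n^'n) \<times> (real^'k^'k)"
    and \<beta>h :: "real \<Rightarrow> real^'k^'n"
    and B C :: "real \<Rightarrow> real^'k^'n \<Rightarrow> real^'k^'n"
  assumes kn: "CARD('k) \<le> CARD('n)"
    and X: "X \<in> Stiefel"
    and I: "is_interval I" "0 \<in> I"
    and \<beta>_in: "\<forall>t\<in>I. \<beta> t \<in> StT X"
    and \<beta>_deriv: "\<forall>t\<in>I. (\<beta> has_vector_derivative \<beta>' t) (at t within I)"
    and u_def: "\<forall>t. u t = (\<beta>' t ** transpose X - X ** transpose (\<beta>' t), transpose X ** \<beta>' t)"
    and S_O: "\<forall>t\<in>I. O_p X (S t)"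
    and S_ode: "\<forall>t\<in>I. \<forall>Z\<in>pset X.
          ((\<lambda>s. S s Z) has_vector_derivative (- (1/2)) *\<^sub>R pr_p X (ad (S t (u t)) (S t Z))) (at t within I)"
    and S_0: "\<forall>Z\<in>pset X. S 0 Z = Z"
    and \<xi>_def: "\<forall>t. \<xi> t = S t (u t)"
    and R_O: "\<forall>t\<in>I. orthogonal_matrix (R t) \<and> orthogonal_matrix (\<theta> t)"
    and R_ode: "\<forall>t\<in>I. (R has_vector_derivative R t ** fst (\<xi> t)) (at t within I)"
    and \<theta>_ode: "\<forall>t\<in>I. (\<theta> has_vector_derivative \<theta> t ** snd (\<xi> t)) (at t within I)"
    and R_0: "R 0 = mat 1" and \<theta>_0: "\<theta> 0 = mat 1"
    and T_O: "\<forall>t\<in>I. O_N X (T t)"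
    and T_ode: "\<forall>t\<in>I. \<forall>W\<in>StN X.
          ((\<lambda>s. T s W) has_vector_derivative - PperpSt X (f_act (\<xi> t) (T t W))) (at t within I)"
    and T_0: "\<forall>W\<in>StN X. T 0 W = W"
    and \<beta>h_def: "\<forall>t. \<beta>h t = R t ** X ** transpose (\<theta> t)"
    and B_def: "\<forall>t V. B t V =
          (let \<eta> = S t (V ** transpose X - X ** transpose V, transpose X ** V)
           in R t ** (fst \<eta> ** X - X ** snd \<eta>) ** transpose (\<theta> t))"
    and C_def: "\<forall>t W. C t W = R t ** T t W ** transpose (\<theta> t)"
  shows "ext_rolling eucl_metric (StT X) (\<lambda>_. StT X) Stiefel StT I \<beta> \<beta>h B C"
proof -
  have \<beta>h_eq: "\<beta>h = (\<lambda>t. \<Phi> (R t) (\<theta> t) X)"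
    using \<beta>h_def by (auto simp: \<Phi>_def)
  have B_eq: "B = (\<lambda>t V. \<Phi> (R t) (\<theta> t) (f_act (S t (hlift X V)) X))"
    using B_def by (auto simp: \<Phi>_def f_act_def hlift_def Let_def)
  have C_eq: "C = (\<lambda>t W. \<Phi> (R t) (\<theta> t) (T t W))"
    using C_def by (auto simp: \<Phi>_def)
  have \<xi>_eq: "\<xi> t = S t (hlift X (\<beta>' t))" for t
    using \<xi>_def u_def by (simp add: hlift_def)
  have \<xi>_pset: "\<forall>t\<in>I. at t within I \<noteq> bot \<longrightarrow> \<xi> t \<in> pset X"
    unfolding \<xi>_eq using hlift_velocity_pset[OF X \<beta>_in] S_O \<beta>_deriv by blast
  then have \<xi>_gset: "\<forall>t\<in>I. at t within I \<noteq> bot \<longrightarrow> \<xi> t \<in> gset"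
    using pset_gset by blast
  have \<beta>h_deriv: "\<forall>t\<in>I. (\<beta>h has_vector_derivative B t (\<beta>' t)) (at t within I)"
    unfolding \<beta>h_eq B_eq \<xi>_eq[symmetric]
    using has_vector_derivative_\<Phi>_const R_ode \<theta>_ode \<xi>_gset by blast
  have S': "\<forall>t\<in>I. \<forall>\<eta>\<in>pset X.
      ((\<lambda>s. S s \<eta>) has_vector_derivative - (1/2) *\<^sub>R pr_p X (ad (\<xi> t) (S t \<eta>))) (at t within I)"
    using S_ode \<xi>_def by simp
  show ?thesis
    unfolding ext_rolling_def tan_parallel_eq_parallel_wrt nor_parallel_eq_parallel_wrt
    using \<beta>_in R_O S_O T_O \<beta>_deriv \<beta>h_deriv
      tangent_frame_parallel_wrt_iff[OF X I(1) R_O R_ode \<theta>_ode \<xi>_pset S_O S']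
      normal_frame_parallel_wrt_iff[OF X I(1) R_O R_ode \<theta>_ode \<xi>_gset T_O T_ode]
    by (auto simp: \<beta>h_eq B_eq C_eq intro: \<Phi>_Stiefel[OF _ _ X] lin_isom_tangent_frame[OF X]
        lin_isom_normal_frame)
qed

end
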